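(* Let $T_1$ be a quadtree in $\mathbb{R}^d$ and $T^*$ its extended quadtree. Let $C_j$ be a cell of $T^*$ with brand $j$. Then every neighboring cell $N$ of $C_j$ with $|N|\ge 2^j|C_j|$ has brand at most $j+1$.
   Context: A quadtree on an axis-aligned root hypercube $R\subset\mathbb{R}^d$ is a hierarchical decomposition in which every node has an associated axis-aligned hypercube (cell) and is either a leaf or has $2^d$ equal-sized children whose cells subdivide its cell. The size $|C|$ of a cell is its edge length. Two cells are neighbors if they are interior-disjoint and share (part of) a $(d-1)$-dimensional facet. For an integer $j$, a cell $C$ is $2^j$-smooth if every leaf neighboring $C$ has size at most $2^j|C|$. Extended quadtree: the cells of $T_1$ get brand $1$. Recursively, for $j\ge1$, let $T^j$ be the quadtree formed by $\bigcup_{i\le j}T_i$, and let $T_{j+1}$ be the minimal set of cells obtained by splitting cells of $T^j$ such that every cell of $T_j$ is $2^j$-smooth in the resulting quadtree; the cells of $T_{j+1}$ get brand $j+1$. The extended quadtree is $T^*=T^{d+1}$. *)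

theory Defs
  imports "HOL-Analysis.Analysis"
begin

text \<open>A cell (axis-aligned hypercube) in R^d, d = CARD('n), is represented by its
  lower corner a and its edge length s > 0; it denotes the set cell_set (a,s).\<close>
type_synonym 'n cell = "(real ^ 'n) \<times> real"

definition cell_set :: "'n::finite cell \<Rightarrow> (real ^ 'n) set" where
  "cell_set C = {x. \<forall>i. fst C $ i \<le> x $ i \<and> x $ i \<le> fst C $ i + snd C}"

definition csize :: "'n::finite cell \<Rightarrow> real" where
  "csize C = snd C"

definition children :: "'n::finite cell \<Rightarrow> 'n cell set" where
  "children C = {(fst C + (snd C / 2) *\<^sub>R v, snd C / 2) | v. \<forall>i. v $ i = 0 \<or> v $ i = 1}"

definition quadtree :: "'n::finite cell \<Rightarrow> 'n cell set \<Rightarrow> bool" where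
  "quadtree R T \<longleftrightarrow> finite T \<and> R \<in> T \<and>
     (\<forall>C\<in>T. C \<noteq> R \<longrightarrow> (\<exists>P\<in>T. C \<in> children P)) \<and>
     (\<forall>C\<in>T. children C \<inter> T = {} \<or> children C \<subseteq> T)"

definition leaf :: "'n::finite cell set \<Rightarrow> 'n cell \<Rightarrow> bool" where
  "leaf T C \<longleftrightarrow> C \<in> T \<and> children C \<inter> T = {}"

text \<open>Neighbors: interior-disjoint and sharing a (d-1)-dimensional part of a facet.\<close>
definition neighbors :: "'n::finite cell \<Rightarrow> 'n cell \<Rightarrow> bool" where
  "neighbors C D \<longleftrightarrow> (\<exists>k.
     (fst C $ k + snd C = fst D $ k \<or> fst D $ k + snd D = fst C $ k) \<and>
     (\<forall>i. i \<noteq> k \<longrightarrow> max (fst C $ i) (fst D $ i) < min (fst C $ i + snd C) (fst D $ i + snd D)))"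

definition smooth :: "'n::finite cell set \<Rightarrow> nat \<Rightarrow> 'n cell \<Rightarrow> bool" where
  "smooth T j C \<longleftrightarrow> (\<forall>L. leaf T L \<and> neighbors L C \<longrightarrow> csize L \<le> 2 ^ j * csize C)"

text \<open>Tk j is the set of cells of brand j (j = 1 .. d+1).\<close>
definition upto_brand :: "(nat \<Rightarrow> 'n::finite cell set) \<Rightarrow> nat \<Rightarrow> 'n cell set" where
  "upto_brand Tk j = (\<Union>i\<in>{1..j}. Tk i)"

definition valid_ext :: "'n::finite cell \<Rightarrow> (nat \<Rightarrow> 'n cell set) \<Rightarrow> nat \<Rightarrow> 'n cell set \<Rightarrow> bool" where
  "valid_ext R Tk j S \<longleftrightarrow> quadtree R (upto_brand Tk j \<union> S) \<and>
     (\<forall>C\<in>Tk j. smooth (upto_brand Tk j \<union> S) j C)"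

definition extended_quadtree :: "'n::finite cell \<Rightarrow> 'n cell set \<Rightarrow> (nat \<Rightarrow> 'n cell set) \<Rightarrow> bool" where
  "extended_quadtree R T1 Tk \<longleftrightarrow> snd R > 0 \<and> quadtree R T1 \<and> Tk 1 = T1 \<and>
     (\<forall>j. 1 \<le> j \<and> j \<le> CARD('n) \<longrightarrow>
        valid_ext R Tk j (Tk (Suc j)) \<and>
        (\<forall>S. valid_ext R Tk j S \<and> S \<subseteq> Tk (Suc j) \<longrightarrow> S = Tk (Suc j)))"

end

theory Submission
  imports Defs
begin

text \<open>Every node of positive size of a quadtree on R is a cell of the dyadic grid of R, and all
  its ancestors are nodes. Suppose a neighbour N of the brand-j cell C with
  \<open>|N| \<ge> 2^j |C|\<close> were not in \<open>T^(j+1)\<close>. Then the deepest ancestor A of N in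
  \<open>T^(j+1)\<close> is a leaf there and \<open>|A| > |N|\<close>. A coarser ancestor of a neighbour of C is
  either itself a neighbour of C or an ancestor of C. In the first case the \<open>2^j\<close>-smoothness
  of C gives \<open>|A| \<le> 2^j |C| \<le> |N|\<close>; in the second the ancestor of C one level below A is a
  node of \<open>T^(j+1)\<close>, so A is not a leaf.\<close>

lemma divide_power2_le_iff:
  fixes r :: real
  assumes "0 < r"
  shows "r / 2 ^ m \<le> r / 2 ^ n \<longleftrightarrow> n \<le> m"
  using assms by (simp add: field_simps mult_le_cancel_left_pos)

lemma divide_power2_less_iff:
  fixes r :: real
  assumes "0 < r"
  shows "r / 2 ^ m < r / 2 ^ n \<longleftrightarrow> n < m"
  using assms by (simp add: field_simps mult_less_cancel_left_pos)

definition dyadic_cell :: "'n::finite cell \<Rightarrow> nat \<Rightarrow> int ^ 'n \<Rightarrow> 'n cell" where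
  "dyadic_cell R n v = (fst R + (snd R / 2 ^ n) *\<^sub>R (\<chi> i. real_of_int (v $ i)), snd R / 2 ^ n)"

text \<open>Index of the ancestor m levels up.\<close>

definition coarsen :: "nat \<Rightarrow> int ^ 'n \<Rightarrow> int ^ 'n" where
  "coarsen m v = (\<chi> i. v $ i div 2 ^ m)"

lemma fst_dyadic_cell [simp]:
  "fst (dyadic_cell R n v) $ i = fst R $ i + snd R / 2 ^ n * real_of_int (v $ i)"
  by (simp add: dyadic_cell_def)

lemma snd_dyadic_cell [simp]: "snd (dyadic_cell R n v) = snd R / 2 ^ n"
  by (simp add: dyadic_cell_def)

lemma dyadic_cell_0 [simp]: "dyadic_cell R 0 0 = R"
  by (simp add: dyadic_cell_def prod_eq_iff vec_eq_iff)

lemma coarsen_0 [simp]: "coarsen 0 v = v"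
  by (simp add: coarsen_def vec_eq_iff)

lemma coarsen_coarsen [simp]: "coarsen a (coarsen b v) = coarsen (b + a) v"
  by (simp add: coarsen_def vec_eq_iff power_add zdiv_zmult2_eq)

lemma dyadic_cell_in_children:
  fixes R :: "'n::finite cell"
  shows "dyadic_cell R (Suc t) w \<in> children (dyadic_cell R t (coarsen 1 w))"
proof -
  define e :: "real ^ 'n" where "e = (\<chi> i. real_of_int (w $ i mod 2))"
  have e01: "e $ i = 0 \<or> e $ i = 1" for i
    using pos_mod_sign[of 2 "w $ i"] pos_mod_bound[of 2 "w $ i"] by (auto simp: e_def)
  have "real_of_int (w $ i) = 2 * real_of_int (w $ i div 2) + real_of_int (w $ i mod 2)" for i
    by (metis of_int_add of_int_mult of_int_numeral mult_div_mod_eq)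
  then have "fst (dyadic_cell R (Suc t) w) =
      fst (dyadic_cell R t (coarsen 1 w)) + (snd (dyadic_cell R t (coarsen 1 w)) / 2) *\<^sub>R e"
    by (simp add: vec_eq_iff coarsen_def e_def field_simps)
  then show ?thesis
    unfolding children_def using e01 by (auto simp: prod_eq_iff)
qed

lemma children_dyadic_cell:
  fixes R :: "'n::finite cell"
  assumes "Q \<in> children (dyadic_cell R t w)"
  obtains v where "Q = dyadic_cell R (Suc t) v" and "coarsen 1 v = w"
proof -
  obtain e :: "real ^ 'n" where e01: "\<forall>i. e $ i = 0 \<or> e $ i = 1"
    and Q: "Q = (fst (dyadic_cell R t w) + (snd (dyadic_cell R t w) / 2) *\<^sub>R e, snd (dyadic_cell R t w) / 2)"
    using assms unfolding children_def by blast
  define v where "v = (\<chi> i. 2 * w $ i + (if e $ i = 0 then 0 else 1))"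
  have "Q = dyadic_cell R (Suc t) v"
    using e01 by (auto simp: Q v_def prod_eq_iff vec_eq_iff field_simps)
  moreover have "coarsen 1 v = w"
    by (simp add: coarsen_def v_def vec_eq_iff)
  ultimately show ?thesis by (rule that)
qed

lemma quadtree_node_dyadic:
  fixes R :: "'n::finite cell"
  assumes qt: "quadtree R T"
  shows "Q \<in> T \<Longrightarrow> 0 < snd Q \<Longrightarrow> \<exists>n v. Q = dyadic_cell R n v \<and> coarsen n v = 0 \<and>
           (\<forall>t\<le>n. dyadic_cell R t (coarsen (n - t) v) \<in> T)"
proof (induction Q rule: measure_induct_rule[where f = "\<lambda>Q. card {P \<in> T. snd Q < snd P}"])
  case (less Q)
  show ?case
  proof (cases "Q = R")
    case True
    with qt show ?thesis
      by (intro exI[of _ 0] exI[of _ 0]) (simp add: quadtree_def)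
  next
    case False
    then obtain P where PT: "P \<in> T" and QP: "Q \<in> children P"
      using qt less.prems(1) by (auto simp: quadtree_def)
    have "snd Q = snd P / 2"
      using QP by (auto simp: children_def)
    with less.prems(2) have "snd Q < snd P" "0 < snd P"
      by auto
    moreover have "finite T"
      using qt by (simp add: quadtree_def)
    ultimately have "card {P' \<in> T. snd P < snd P'} < card {P' \<in> T. snd Q < snd P'}"
      using PT by (intro psubset_card_mono) auto
    then obtain n w where P: "P = dyadic_cell R n w" and w0: "coarsen n w = 0"
      and ancestors: "\<forall>t\<le>n. dyadic_cell R t (coarsen (n - t) w) \<in> T"
      using less.IH[of P] PT \<open>0 < snd P\<close> by blast
    obtain v where Q: "Q = dyadic_cell R (Suc n) v" and vw: "coarsen 1 v = w"
      using QP P children_dyadic_cell by metis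
    have "coarsen (Suc n - t) v = coarsen (n - t) w" if "t \<le> n" for t
      using that by (simp add: vw[symmetric] Suc_diff_le)
    then have "\<forall>t\<le>Suc n. dyadic_cell R t (coarsen (Suc n - t) v) \<in> T"
      using ancestors Q less.prems(1) by (auto simp: le_Suc_eq)
    moreover have "coarsen (Suc n) v = 0"
      using w0 by (simp flip: vw)
    ultimately show ?thesis
      using Q by blast
  qed
qed

lemma exists_leaf_ancestor:
  fixes R :: "'n::finite cell"
  assumes qt: "quadtree R U" and v0: "coarsen n v = 0" and notin: "dyadic_cell R n v \<notin> U"
  shows "\<exists>t<n. leaf U (dyadic_cell R t (coarsen (n - t) v))"
proof -
  have "dyadic_cell R 0 (coarsen (n - 0) v) \<in> U"
    using qt v0 by (simp add: quadtree_def)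
  then obtain t where t: "t < n" and anc: "dyadic_cell R t (coarsen (n - t) v) \<in> U"
    and child: "dyadic_cell R (Suc t) (coarsen (n - Suc t) v) \<notin> U"
    using ex_least_nat_less[of "\<lambda>t. dyadic_cell R t (coarsen (n - t) v) \<notin> U" n] notin
    by auto
  have "dyadic_cell R (Suc t) (coarsen (n - Suc t) v) \<in> children (dyadic_cell R t (coarsen (n - t) v))"
    using dyadic_cell_in_children[of R t "coarsen (n - Suc t) v"] t by (simp add: Suc_diff_Suc)
  then have "children (dyadic_cell R t (coarsen (n - t) v)) \<inter> U = {}"
    using qt anc child unfolding quadtree_def by blast
  then show ?thesis
    using t anc by (auto simp: leaf_def)
qed

definition int_neighbors :: "('n \<Rightarrow> int) \<Rightarrow> int \<Rightarrow> ('n \<Rightarrow> int) \<Rightarrow> int \<Rightarrow> bool" where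
  "int_neighbors X s Y t \<longleftrightarrow> (\<exists>k. (X k + s = Y k \<or> Y k + t = X k) \<and>
     (\<forall>i. i \<noteq> k \<longrightarrow> max (X i) (Y i) < min (X i + s) (Y i + t)))"

lemma dyadic_cell_at_finer_level:
  fixes R :: "'n::finite cell"
  assumes "m \<le> p"
  shows "fst (dyadic_cell R m x) $ i = fst R $ i + snd R / 2 ^ p * real_of_int (2 ^ (p - m) * x $ i)"
    and "snd (dyadic_cell R m x) = snd R / 2 ^ p * real_of_int (2 ^ (p - m))"
proof -
  have "(2::real) ^ p = 2 ^ m * 2 ^ (p - m)"
    using assms by (simp flip: power_add)
  then show "fst (dyadic_cell R m x) $ i = fst R $ i + snd R / 2 ^ p * real_of_int (2 ^ (p - m) * x $ i)"
    and "snd (dyadic_cell R m x) = snd R / 2 ^ p * real_of_int (2 ^ (p - m))"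
    by simp_all
qed

lemma neighbors_dyadic_cell_iff:
  fixes R :: "'n::finite cell"
  assumes R: "0 < snd R" and "p1 \<le> p" "p2 \<le> p"
  shows "neighbors (dyadic_cell R p1 x) (dyadic_cell R p2 y) \<longleftrightarrow>
    int_neighbors (\<lambda>i. 2 ^ (p - p1) * x $ i) (2 ^ (p - p1)) (\<lambda>i. 2 ^ (p - p2) * y $ i) (2 ^ (p - p2))"
proof -
  define h where "h = snd R / 2 ^ p"
  have "0 < h"
    using R by (simp add: h_def)
  then have less: "b + h * real_of_int X < b + h * real_of_int Y \<longleftrightarrow> X < Y"
    and eq: "b + h * real_of_int X = b + h * real_of_int Y \<longleftrightarrow> X = Y" for b X Y
    by simp_all
  have add: "b + h * real_of_int X + h * real_of_int Y = b + h * real_of_int (X + Y)" for b X Y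
    by (simp add: algebra_simps)
  show ?thesis
    unfolding neighbors_def int_neighbors_def max_less_iff_conj min_less_iff_conj
    using assms(2,3) by (simp only: dyadic_cell_at_finer_level h_def[symmetric] add less eq)
qed

lemma int_div_eqI:
  fixes S b u :: int
  assumes "0 < S" "S * b \<le> u" "u < S * b + S"
  shows "u div S = b"
proof -
  have "u div S = (u - S * b + b * S) div S"
    by simp
  also have "\<dots> = b + (u - S * b) div S"
    using assms(1) by (intro div_mult_self1) simp
  also have "(u - S * b) div S = 0"
    using assms by (simp add: zdiv_eq_0_iff)
  finally show ?thesis
    by simp
qed

lemma int_neighbors_coarsen:
  fixes u y :: "'n \<Rightarrow> int" and s q :: int
  assumes s: "1 \<le> s" and q: "1 \<le> q" and nb: "int_neighbors u 1 (\<lambda>i. s * y i) s"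
  shows "int_neighbors (\<lambda>i. s * q * (y i div q)) (s * q) u 1 \<or> (\<forall>i. u i div (s * q) = y i div q)"
proof -
  define S where "S = s * q"
  define b where "b i = y i div q" for i
  have "1 \<le> S"
    using mult_mono[of 1 s 1 q] s q by (simp add: S_def)
  have block: "S * b i \<le> s * y i \<and> s * y i + s \<le> S * b i + S" for i
  proof -
    have "q * b i \<le> y i" "y i + 1 \<le> q * b i + q"
      using q pos_mod_bound[of q "y i"] pos_mod_sign[of q "y i"] mult_div_mod_eq[of q "y i"]
      unfolding b_def by linarith+
    then have "s * (q * b i) \<le> s * y i" "s * (y i + 1) \<le> s * (q * b i + q)"
      using s by (simp_all add: mult_left_mono)
    then show ?thesis
      by (simp add: S_def algebra_simps)
  qed
  obtain k where touch: "u k + 1 = s * y k \<or> s * y k + s = u k"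
    and overlap: "\<forall>i. i \<noteq> k \<longrightarrow> max (u i) (s * y i) < min (u i + 1) (s * y i + s)"
    using nb unfolding int_neighbors_def by blast
  have inside: "S * b i \<le> u i \<and> u i < S * b i + S" if "i \<noteq> k" for i
    using overlap that block[of i] by auto
  consider "S * b k + S = u k \<or> u k + 1 = S * b k" | "S * b k \<le> u k \<and> u k < S * b k + S"
    using touch block[of k] s by fastforce
  then show ?thesis
  proof cases
    case 1
    with inside have "int_neighbors (\<lambda>i. S * b i) S u 1"
      unfolding int_neighbors_def by (intro exI[of _ k]) auto
    then show ?thesis
      by (simp add: S_def b_def)
  next
    case 2
    with inside have "u i div S = b i" for i
      using \<open>1 \<le> S\<close> by (cases "i = k") (auto intro: int_div_eqI)
    then show ?thesis
      by (simp add: S_def b_def)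
  qed
qed

lemma neighbor_ancestor_cases:
  fixes R :: "'n::finite cell"
  assumes R: "0 < snd R" and "n \<le> p" "t \<le> n"
    and nb: "neighbors (dyadic_cell R p u) (dyadic_cell R n v)"
  shows "neighbors (dyadic_cell R t (coarsen (n - t) v)) (dyadic_cell R p u) \<or>
    coarsen (p - t) u = coarsen (n - t) v"
proof -
  have "int_neighbors (\<lambda>i. u $ i) 1 (\<lambda>i. 2 ^ (p - n) * v $ i) (2 ^ (p - n))"
    using nb neighbors_dyadic_cell_iff[OF R, of p p n u v] assms by simp
  then have "int_neighbors (\<lambda>i. 2 ^ (p - n) * 2 ^ (n - t) * (v $ i div 2 ^ (n - t))) (2 ^ (p - n) * 2 ^ (n - t)) (\<lambda>i. u $ i) 1 \<or>
      (\<forall>i. u $ i div (2 ^ (p - n) * 2 ^ (n - t)) = v $ i div 2 ^ (n - t))"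
    by (rule int_neighbors_coarsen[rotated 2]) simp_all
  moreover have "(2::int) ^ (p - n) * 2 ^ (n - t) = 2 ^ (p - t)"
    using assms by (simp flip: power_add)
  ultimately show ?thesis
    using neighbors_dyadic_cell_iff[OF R, of t p p "coarsen (n - t) v" u] assms
    by (simp add: coarsen_def vec_eq_iff)
qed

lemma neighbors_snd_pos:
  fixes C D :: "'n::finite cell"
  assumes nb: "neighbors C D" and card: "2 \<le> CARD('n)"
  shows "0 < snd C" and "0 < snd D"
proof -
  obtain k where overlap: "\<forall>i. i \<noteq> k \<longrightarrow> max (fst C $ i) (fst D $ i) < min (fst C $ i + snd C) (fst D $ i + snd D)"
    using nb unfolding neighbors_def by blast
  have "UNIV \<noteq> {k}"
  proof
    assume "UNIV = {k}"
    then have "CARD('n) = card {k}"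
      by (simp only:)
    with card show False
      by simp
  qed
  then obtain i where "i \<noteq> k"
    by blast
  with overlap show "0 < snd C" and "0 < snd D"
    by auto
qed

lemma large_neighbor_of_smooth_cell:
  fixes R :: "'n::finite cell"
  assumes R: "0 < snd R" and U: "quadtree R U" and T: "quadtree R T"
    and C: "C \<in> U" "0 < csize C" "smooth U j C"
    and N: "N \<in> T" "0 < csize N"
    and CN: "neighbors C N" and large: "2 ^ j * csize C \<le> csize N"
  shows "N \<in> U"
proof (rule ccontr)
  assume "N \<notin> U"
  obtain p u where Cp: "C = dyadic_cell R p u"
    and ancestors: "\<forall>t\<le>p. dyadic_cell R t (coarsen (p - t) u) \<in> U"
    using quadtree_node_dyadic[OF U C(1)] C(2) by (auto simp: csize_def)
  obtain n v where Nn: "N = dyadic_cell R n v" and "coarsen n v = 0"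
    using quadtree_node_dyadic[OF T N(1)] N(2) by (auto simp: csize_def)
  have "csize C \<le> csize N"
    using large C(2) by (simp add: order.trans[OF _ large])
  then have "n \<le> p"
    using R by (simp add: Cp Nn csize_def divide_power2_le_iff)
  obtain t where "t < n" and leaf: "leaf U (dyadic_cell R t (coarsen (n - t) v))"
    using exists_leaf_ancestor[OF U \<open>coarsen n v = 0\<close>] \<open>N \<notin> U\<close> Nn by blast
  define A where "A = dyadic_cell R t (coarsen (n - t) v)"
  consider "neighbors A C" | "coarsen (p - t) u = coarsen (n - t) v"
    using neighbor_ancestor_cases[OF R \<open>n \<le> p\<close>, of t u v] \<open>t < n\<close> CN
    by (auto simp: A_def Cp Nn)
  then show False
  proof cases
    case 1
    with leaf C(3) have "csize A \<le> 2 ^ j * csize C"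
      unfolding smooth_def A_def by blast
    moreover have "csize N < csize A"
      using R \<open>t < n\<close> by (simp add: A_def Nn csize_def divide_power2_less_iff)
    ultimately show False
      using large by simp
  next
    case 2
    have "dyadic_cell R (Suc t) (coarsen (p - Suc t) u) \<in> children A"
      using dyadic_cell_in_children[of R t "coarsen (p - Suc t) u"] 2 \<open>t < n\<close> \<open>n \<le> p\<close>
      by (simp add: A_def Suc_diff_Suc)
    moreover have "dyadic_cell R (Suc t) (coarsen (p - Suc t) u) \<in> U"
      using ancestors \<open>t < n\<close> \<open>n \<le> p\<close> by simp
    ultimately show False
      using leaf by (auto simp: leaf_def A_def)
  qed
qed

lemma upto_brand_Suc: "upto_brand Tk (Suc j) = upto_brand Tk j \<union> Tk (Suc j)"
  by (auto simp: upto_brand_def atLeastAtMostSuc_conv)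

lemma extended_quadtree_quadtree:
  fixes R :: "'n::finite cell"
  assumes "extended_quadtree R T1 Tk" "1 \<le> j" "j \<le> CARD('n)"
  shows "quadtree R (upto_brand Tk (Suc j))"
  using assms by (simp add: extended_quadtree_def valid_ext_def upto_brand_Suc)

lemma extended_quadtree_smooth:
  fixes R :: "'n::finite cell"
  assumes "extended_quadtree R T1 Tk" "1 \<le> j" "j \<le> CARD('n)" "C \<in> Tk j"
  shows "smooth (upto_brand Tk (Suc j)) j C"
  using assms by (simp add: extended_quadtree_def valid_ext_def upto_brand_Suc)

theorem lemma16:
  fixes R :: "'n::finite cell" and T1 :: "'n cell set" and Tk :: "nat \<Rightarrow> 'n cell set"
  assumes "extended_quadtree R T1 Tk"
    and "1 \<le> j" and "j \<le> CARD('n) + 1"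
    and "C \<in> Tk j"
    and "N \<in> upto_brand Tk (CARD('n) + 1)"
    and "neighbors C N"
    and "csize N \<ge> 2 ^ j * csize C"
  shows "\<exists>i\<in>{1..j+1}. N \<in> Tk i"
proof (cases "CARD('n) \<le> j")
  case True
  with assms(5) show ?thesis
    by (auto simp: upto_brand_def)
next
  case False
  have "0 < snd R"
    using assms(1) by (simp add: extended_quadtree_def)
  moreover have "quadtree R (upto_brand Tk (Suc j))" "smooth (upto_brand Tk (Suc j)) j C"
    using extended_quadtree_quadtree[OF assms(1,2)] extended_quadtree_smooth[OF assms(1,2) _ assms(4)] False
    by simp_all
  moreover have "quadtree R (upto_brand Tk (Suc CARD('n)))"
    using extended_quadtree_quadtree[OF assms(1)] assms(2) False by simp
  moreover have "0 < csize C" "0 < csize N"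
    using neighbors_snd_pos[OF assms(6)] assms(2) False by (simp_all add: csize_def)
  moreover have "C \<in> upto_brand Tk (Suc j)"
    using assms(2,4) by (auto simp: upto_brand_def)
  ultimately have "N \<in> upto_brand Tk (Suc j)"
    using large_neighbor_of_smooth_cell assms(5-7) by simp
  then show ?thesis
    by (auto simp: upto_brand_def)
qed

end
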